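(* Let $G_0$ be a connected graph with two distinct vertices $x,y$ such that $d_{G_0}(x)\in\{2,3\}$ and $d_{G_0}(y)\in\{2,3\}$. Let $P_1=u_1u_2\cdots u_k$ ($k\ge1$) and $P_2=v_1v_2\cdots v_l$ ($l\ge1$) be paths, vertex-disjoint from each other and from $G_0$. Let $G_1$ be the graph obtained from the disjoint union of $G_0,P_1,P_2$ by adding the edges $u_1x$ and $v_1y$, and let $G_2=G_1-u_1x+u_1v_l$. Then $SO(G_1)>SO(G_2)$ and $SO_{red}(G_1)>SO_{red}(G_2)$.
   Context: $d_G(u)$ denotes the degree of $u$ in $G$. $SO(G)=\sum_{uv\in E(G)}\sqrt{d_G(u)^2+d_G(v)^2}$ and $SO_{red}(G)=\sum_{uv\in E(G)}\sqrt{(d_G(u)-1)^2+(d_G(v)-1)^2}$. *)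

theory Defs
  imports Complex_Main
begin

definition simple_graph :: "'a set \<Rightarrow> 'a set set \<Rightarrow> bool" where
  "simple_graph V E \<longleftrightarrow> finite V \<and> (\<forall>e\<in>E. e \<subseteq> V \<and> card e = 2)"

definition adj_rel :: "'a set set \<Rightarrow> ('a \<times> 'a) set" where
  "adj_rel E = {(a, b). {a, b} \<in> E}"

definition connected_graph :: "'a set \<Rightarrow> 'a set set \<Rightarrow> bool" where
  "connected_graph V E \<longleftrightarrow> simple_graph V E \<and> V \<noteq> {} \<and>
     (\<forall>u\<in>V. \<forall>w\<in>V. (u, w) \<in> (adj_rel E)\<^sup>*)"

definition deg :: "'a set set \<Rightarrow> 'a \<Rightarrow> nat" where
  "deg E v = card {e \<in> E. v \<in> e}"

definition SO :: "'a set set \<Rightarrow> real" where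
  "SO E = (\<Sum>e\<in>E. sqrt (\<Sum>w\<in>e. (real (deg E w))\<^sup>2))"

definition SO_red :: "'a set set \<Rightarrow> real" where
  "SO_red E = (\<Sum>e\<in>E. sqrt (\<Sum>w\<in>e. (real (deg E w) - 1)\<^sup>2))"

definition path_edges :: "'a list \<Rightarrow> 'a set set" where
  "path_edges xs = {{xs ! i, xs ! Suc i} | i. Suc i < length xs}"

end

theory Submission
  imports Defs
begin

(* Moving the edge u1 x to u1 v_l changes degrees only at x, which drops by one from d(x) >= 3,
   and at the pendant vertex v_l, which rises from 1 to 2.  For an index
   sum_{uv} sqrt(f(d u)^2 + f(d v)^2) with f monotone and f(1) >= 0 (f d = d gives SO,
   f d = d - 1 gives SO_red), no edge other than u1 x, u1 v_l and the pendant edge z v_l gains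
   weight, so it suffices that
     sqrt(f(a)^2 + f(2)^2) + sqrt(f(c)^2 + f(2)^2) < sqrt(f(a)^2 + f(b)^2) + sqrt(f(c)^2 + f(1)^2)
   for a = d(u1) <= 2, b = d(x) >= 3 and c = d(z) >= 2, where z is v_{l-1}, or y if l = 1.
   Squaring reduces this to comparing sums and products of the radicands. *)

lemma sqrt_add_sqrt_less:
  fixes a b c d :: real
  assumes "0 \<le> a" "0 \<le> b" "0 \<le> c" "0 \<le> d" "a + b \<le> c + d" "a * b < c * d"
  shows "sqrt a + sqrt b < sqrt c + sqrt d"
proof -
  have "sqrt a * sqrt b < sqrt c * sqrt d"
    using assms by (metis real_sqrt_less_mono real_sqrt_mult)
  then have "(sqrt a + sqrt b)\<^sup>2 < (sqrt c + sqrt d)\<^sup>2"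
    using assms by (simp add: power2_sum)
  then show ?thesis
    by (rule power_less_imp_less_base) (use assms in auto)
qed

lemma sombor_exchange_inequality:
  fixes a b c :: real
  assumes "0 \<le> a" "a \<le> 2" "3 \<le> b" "2 \<le> c"
  shows "sqrt (a\<^sup>2 + 2\<^sup>2) + sqrt (c\<^sup>2 + 2\<^sup>2) < sqrt (a\<^sup>2 + b\<^sup>2) + sqrt (c\<^sup>2 + 1\<^sup>2)"
proof -
  have "a\<^sup>2 \<le> 2\<^sup>2" "2\<^sup>2 \<le> c\<^sup>2" "3\<^sup>2 \<le> b\<^sup>2"
    using power_mono[of a 2 2] power_mono[of 2 c 2] power_mono[of 3 b 2] assms by auto
  then have "sqrt (a\<^sup>2 + 2\<^sup>2) + sqrt (c\<^sup>2 + 2\<^sup>2) < sqrt (a\<^sup>2 + 3\<^sup>2) + sqrt (c\<^sup>2 + 1\<^sup>2)"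
    by (intro sqrt_add_sqrt_less) (simp_all add: algebra_simps)
  also have "\<dots> \<le> sqrt (a\<^sup>2 + b\<^sup>2) + sqrt (c\<^sup>2 + 1\<^sup>2)"
    using \<open>3\<^sup>2 \<le> b\<^sup>2\<close> by simp
  finally show ?thesis .
qed

lemma reduced_sombor_exchange_inequality:
  fixes a b c :: real
  assumes "\<bar>a\<bar> \<le> 1" "2 \<le> b" "1 \<le> c"
  shows "sqrt (a\<^sup>2 + 1) + sqrt (c\<^sup>2 + 1) < sqrt (a\<^sup>2 + b\<^sup>2) + sqrt (c\<^sup>2)"
proof -
  have "a\<^sup>2 \<le> 1" "1 \<le> c\<^sup>2" "2\<^sup>2 \<le> b\<^sup>2"
    using power_mono[of 2 b 2] assms by (auto simp: abs_square_le_1 one_le_power)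
  then have "sqrt (a\<^sup>2 + 1) + sqrt (c\<^sup>2 + 1) < sqrt (a\<^sup>2 + 2\<^sup>2) + sqrt (c\<^sup>2)"
    by (intro sqrt_add_sqrt_less) (simp_all add: algebra_simps)
  also have "\<dots> \<le> sqrt (a\<^sup>2 + b\<^sup>2) + sqrt (c\<^sup>2)"
    using \<open>2\<^sup>2 \<le> b\<^sup>2\<close> by simp
  finally show ?thesis .
qed

lemma simple_graph_finite_edges:
  assumes "simple_graph V E"
  shows "finite E"
proof -
  have "E \<subseteq> Pow V" "finite V"
    using assms unfolding simple_graph_def by auto
  then show ?thesis
    by (meson finite_Pow_iff finite_subset)
qed

lemma deg_insert_edge:
  assumes "finite E" "e \<notin> E"
  shows "deg (insert e E) w = deg E w + (if w \<in> e then 1 else 0)"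
proof -
  have "{e' \<in> insert e E. w \<in> e'} = (if w \<in> e then insert e {e' \<in> E. w \<in> e'} else {e' \<in> E. w \<in> e'})"
    by auto
  then show ?thesis
    using assms by (simp add: deg_def)
qed

lemma deg_replace_edge:
  assumes "finite E" "p \<in> E" "q \<notin> E"
  shows "deg ((E - {p}) \<union> {q}) w + (if w \<in> p then 1 else 0) = deg E w + (if w \<in> q then 1 else 0)"
proof -
  have "deg E w = deg (E - {p}) w + (if w \<in> p then 1 else 0)"
    using assms(1,2) deg_insert_edge[of "E - {p}" p w] by (simp add: insert_absorb)
  moreover have "deg ((E - {p}) \<union> {q}) w = deg (E - {p}) w + (if w \<in> q then 1 else 0)"
    using assms(1,3) deg_insert_edge[of "E - {p}" q w] by simp
  ultimately show ?thesis
    by simp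
qed

lemma deg_pos:
  assumes "finite E" "e \<in> E" "w \<in> e"
  shows "0 < deg E w"
  unfolding deg_def using assms card_gt_0_iff by fastforce

lemma deg_mono:
  assumes "finite E'" "E \<subseteq> E'"
  shows "deg E w \<le> deg E' w"
  unfolding deg_def using assms by (intro card_mono) auto

lemma deg_eq_on_subset:
  assumes "E' \<subseteq> E" "\<forall>e \<in> E - E'. w \<notin> e"
  shows "deg E w = deg E' w"
proof -
  have "{e \<in> E. w \<in> e} = {e \<in> E'. w \<in> e}"
    using assms by blast
  then show ?thesis
    by (simp add: deg_def)
qed

lemma finite_path_edges: "finite (path_edges xs)"
proof -
  have "path_edges xs = (\<lambda>i. {xs ! i, xs ! Suc i}) ` {..<length xs - 1}"
    unfolding path_edges_def by auto
  then show ?thesis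
    by simp
qed

lemma path_edges_subset: "e \<in> path_edges xs \<Longrightarrow> e \<subseteq> set xs"
  unfolding path_edges_def by auto

lemma path_edges_Cons:
  assumes "xs \<noteq> []"
  shows "path_edges (a # xs) = insert {a, hd xs} (path_edges xs)"
proof (intro equalityI subsetI)
  fix e assume "e \<in> path_edges (a # xs)"
  then obtain i where "Suc i < Suc (length xs)" "e = {(a # xs) ! i, (a # xs) ! Suc i}"
    by (auto simp: path_edges_def)
  then show "e \<in> insert {a, hd xs} (path_edges xs)"
    using assms by (cases i) (auto simp: path_edges_def hd_conv_nth)
next
  fix e assume "e \<in> insert {a, hd xs} (path_edges xs)"
  then consider "e = {(a # xs) ! 0, (a # xs) ! Suc 0}"
    | i where "Suc i < length xs" "e = {(a # xs) ! Suc i, (a # xs) ! Suc (Suc i)}"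
    using assms by (auto simp: path_edges_def hd_conv_nth)
  then show "e \<in> path_edges (a # xs)"
  proof cases
    case 1
    then show ?thesis
      using assms unfolding path_edges_def by (intro CollectI exI[of _ 0]) simp
  next
    case (2 i)
    then show ?thesis
      unfolding path_edges_def by (intro CollectI exI[of _ "Suc i"]) simp
  qed
qed

lemma path_edges_attach_two_paths:
  assumes "us \<noteq> []" "vs \<noteq> []"
  shows "E \<union> path_edges us \<union> path_edges vs \<union> {{hd us, x}, {hd vs, y}} =
    E \<union> path_edges (x # us) \<union> path_edges (y # vs)"
  unfolding path_edges_Cons[OF assms(1)] path_edges_Cons[OF assms(2)] by (auto simp: insert_commute)

lemma path_edges_containing_nth:
  assumes "distinct xs" "i < length xs"
  shows "{e \<in> path_edges xs. xs ! i \<in> e} =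
    (if 0 < i then {{xs ! (i - 1), xs ! i}} else {}) \<union>
    (if Suc i < length xs then {{xs ! i, xs ! Suc i}} else {})"
proof (intro equalityI subsetI)
  fix e assume "e \<in> {e \<in> path_edges xs. xs ! i \<in> e}"
  then obtain j where j: "Suc j < length xs" "e = {xs ! j, xs ! Suc j}" "xs ! i \<in> e"
    by (auto simp: path_edges_def)
  then have "i = j \<or> i = Suc j"
    using assms by (auto simp: nth_eq_iff_index_eq)
  then show "e \<in> (if 0 < i then {{xs ! (i - 1), xs ! i}} else {}) \<union>
    (if Suc i < length xs then {{xs ! i, xs ! Suc i}} else {})"
    using j by auto
next
  fix e assume "e \<in> (if 0 < i then {{xs ! (i - 1), xs ! i}} else {}) \<union>
    (if Suc i < length xs then {{xs ! i, xs ! Suc i}} else {})"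
  then consider "0 < i" "e = {xs ! (i - 1), xs ! Suc (i - 1)}" | "Suc i < length xs" "e = {xs ! i, xs ! Suc i}"
    by (auto split: if_splits)
  then show "e \<in> {e \<in> path_edges xs. xs ! i \<in> e}"
    using assms(2) unfolding path_edges_def by cases (auto intro!: exI)
qed

lemma deg_path_edges_le_2:
  assumes "distinct xs"
  shows "deg (path_edges xs) w \<le> 2"
proof (cases "w \<in> set xs")
  case True
  then obtain i where i: "i < length xs" "w = xs ! i"
    by (auto simp: in_set_conv_nth)
  have "deg (path_edges xs) w = card ((if 0 < i then {{xs ! (i - 1), xs ! i}} else {}) \<union>
      (if Suc i < length xs then {{xs ! i, xs ! Suc i}} else {}))"
    unfolding deg_def i(2) path_edges_containing_nth[OF assms i(1)] ..
  also have "\<dots> \<le> 2"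
    by (rule order_trans[OF card_Un_le]) simp
  finally show ?thesis .
next
  case False
  then have "{e \<in> path_edges xs. w \<in> e} = {}"
    using path_edges_subset by blast
  then show ?thesis
    unfolding deg_def by (metis card.empty zero_le)
qed

lemma deg_path_edges_interior:
  assumes "distinct xs" "0 < i" "Suc i < length xs"
  shows "deg (path_edges xs) (xs ! i) = 2"
proof -
  have "xs ! (i - 1) \<noteq> xs ! i" "xs ! (i - 1) \<noteq> xs ! Suc i"
    using assms by (simp_all add: nth_eq_iff_index_eq)
  then show ?thesis
    using assms by (simp add: deg_def path_edges_containing_nth doubleton_eq_iff)
qed

lemma path_edges_containing_last:
  assumes "distinct xs" "2 \<le> length xs"
  shows "{e \<in> path_edges xs. last xs \<in> e} = {{xs ! (length xs - 2), last xs}}"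
proof -
  have i: "length xs - 1 < length xs" "0 < length xs - 1" "\<not> Suc (length xs - 1) < length xs"
    using assms(2) by auto
  have "{e \<in> path_edges xs. xs ! (length xs - 1) \<in> e} = {{xs ! (length xs - 1 - 1), xs ! (length xs - 1)}}"
    using path_edges_containing_nth[OF assms(1) i(1)] i(2,3) by (simp only: if_True if_False Un_empty_right)
  moreover have "xs \<noteq> []"
    using assms(2) by auto
  then have "last xs = xs ! (length xs - 1)" "length xs - 1 - 1 = length xs - 2"
    by (simp_all add: last_conv_nth)
  ultimately show ?thesis
    by simp
qed

lemma neighbour_of_path_end:
  assumes "finite E" "distinct ys" "2 \<le> length ys" "path_edges ys \<subseteq> E"
    and "\<forall>e \<in> E - path_edges ys. last ys \<notin> e" and "2 \<le> deg E (hd ys)"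
  obtains z where "z \<in> set ys" "z \<noteq> last ys" "{e \<in> E. last ys \<in> e} = {{z, last ys}}"
    "2 \<le> deg E z"
proof
  define z where "z = ys ! (length ys - 2)"
  show "z \<in> set ys"
    using assms(3) by (simp add: z_def)
  have "ys \<noteq> []"
    using assms(3) by auto
  then show "z \<noteq> last ys"
    using assms(2,3) by (simp add: z_def last_conv_nth nth_eq_iff_index_eq)
  show "{e \<in> E. last ys \<in> e} = {{z, last ys}}"
    using path_edges_containing_last[OF assms(2,3)] assms(4,5) unfolding z_def by blast
  show "2 \<le> deg E z"
  proof (cases "length ys = 2")
    case True
    then show ?thesis
      using assms(6) \<open>ys \<noteq> []\<close> by (simp add: z_def hd_conv_nth)
  next
    case False
    then have "deg (path_edges ys) z = 2"
      using deg_path_edges_interior[OF assms(2), of "length ys - 2"] assms(3) by (simp add: z_def)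
    then show ?thesis
      using deg_mono[OF assms(1,4)] by metis
  qed
qed

definition edge_weight :: "(nat \<Rightarrow> real) \<Rightarrow> 'a set set \<Rightarrow> 'a set \<Rightarrow> real" where
  "edge_weight f E e = sqrt (\<Sum>w\<in>e. (f (deg E w))\<^sup>2)"

definition sombor_index :: "(nat \<Rightarrow> real) \<Rightarrow> 'a set set \<Rightarrow> real" where
  "sombor_index f E = (\<Sum>e\<in>E. edge_weight f E e)"

lemma SO_eq_sombor_index: "SO E = sombor_index real E"
  unfolding SO_def sombor_index_def edge_weight_def ..

lemma SO_red_eq_sombor_index: "SO_red E = sombor_index (\<lambda>d. real d - 1) E"
  unfolding SO_red_def sombor_index_def edge_weight_def ..

lemma edge_weight_doubleton:
  "a \<noteq> b \<Longrightarrow> edge_weight f E {a, b} = sqrt ((f (deg E a))\<^sup>2 + (f (deg E b))\<^sup>2)"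
  unfolding edge_weight_def by simp

lemma edge_weight_mono:
  assumes "mono f" "0 \<le> f 1" "finite E'" "e \<in> E'" "\<And>w. w \<in> e \<Longrightarrow> deg E' w \<le> deg E w"
  shows "edge_weight f E' e \<le> edge_weight f E e"
proof -
  have "(f (deg E' w))\<^sup>2 \<le> (f (deg E w))\<^sup>2" if "w \<in> e" for w
  proof -
    have "1 \<le> deg E' w"
      using deg_pos[OF assms(3,4) that] by simp
    then have "0 \<le> f (deg E' w)" "f (deg E' w) \<le> f (deg E w)"
      using assms(2) assms(5)[OF that] monoD[OF assms(1)] by (auto intro: order_trans)
    then show ?thesis
      by (simp add: power_mono)
  qed
  then show ?thesis
    unfolding edge_weight_def by (intro real_sqrt_le_mono sum_mono)
qed

lemma edge_to_pendant_notin: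
  assumes "{e \<in> E. v \<in> e} = {{z, v}}" "u \<noteq> z" "u \<noteq> v"
  shows "{u, v} \<notin> E"
proof
  assume "{u, v} \<in> E"
  then have "{u, v} \<in> {e \<in> E. v \<in> e}"
    by simp
  then have "{u, v} = {z, v}"
    unfolding assms(1) by simp
  then show False
    using assms(2,3) by (simp add: doubleton_eq_iff)
qed

lemma deg_move_edge_to_pendant:
  assumes "finite E" "{u, x} \<in> E" "{e \<in> E. v \<in> e} = {{z, v}}" "distinct [u, x, v, z]"
  defines "E' \<equiv> (E - {{u, x}}) \<union> {{u, v}}"
  shows "deg E' u = deg E u" "deg E' v = 2" "deg E' z = deg E z" "\<And>w. w \<noteq> v \<Longrightarrow> deg E' w \<le> deg E w"
proof -
  have "{u, v} \<notin> E"
    using assms(4) by (intro edge_to_pendant_notin[OF assms(3)]) auto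
  then have deg_E': "deg E' w + (if w \<in> {u, x} then 1 else 0) = deg E w + (if w \<in> {u, v} then 1 else 0)" for w
    unfolding E'_def by (rule deg_replace_edge[OF assms(1,2)])
  have "deg E v = 1"
    using assms(3) by (simp add: deg_def)
  then show "deg E' u = deg E u" "deg E' v = 2" "deg E' z = deg E z"
    using deg_E'[of u] deg_E'[of v] deg_E'[of z] assms(4) by auto
  show "deg E' w \<le> deg E w" if "w \<noteq> v" for w
    using deg_E'[of w] that by (auto split: if_splits)
qed

lemma sombor_index_move_edge_to_pendant:
  fixes f :: "nat \<Rightarrow> real"
  assumes fin: "finite E" and p: "{u, x} \<in> E" and pendant: "{e \<in> E. v \<in> e} = {{z, v}}"
    and distinct: "distinct [u, x, v, z]" and f: "mono f" "0 \<le> f 1"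
    and gain: "sqrt ((f (deg E u))\<^sup>2 + (f 2)\<^sup>2) + sqrt ((f (deg E z))\<^sup>2 + (f 2)\<^sup>2)
      < sqrt ((f (deg E u))\<^sup>2 + (f (deg E x))\<^sup>2) + sqrt ((f (deg E z))\<^sup>2 + (f 1)\<^sup>2)"
  shows "sombor_index f ((E - {{u, x}}) \<union> {{u, v}}) < sombor_index f E"
proof -
  define E' where "E' = (E - {{u, x}}) \<union> {{u, v}}"
  define R where "R = E - {{u, x}} - {{z, v}}"
  note deg_E' = deg_move_edge_to_pendant[OF fin p pendant distinct, folded E'_def]
  have "{z, v} \<in> E" "{z, v} \<noteq> {u, x}" "{u, v} \<notin> E" "u \<noteq> x" "u \<noteq> v" "z \<noteq> v"
    using pendant distinct edge_to_pendant_notin[OF pendant] by (auto simp: doubleton_eq_iff)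
  have "deg E v = 1"
    using pendant by (simp add: deg_def)
  have "sombor_index f E = edge_weight f E {u, x} + edge_weight f E {z, v} + sum (edge_weight f E) R"
    unfolding sombor_index_def R_def using fin p \<open>{z, v} \<in> E\<close> \<open>{z, v} \<noteq> {u, x}\<close>
    by (simp add: sum.remove)
  moreover have "sombor_index f E' = edge_weight f E' {u, v} + edge_weight f E' {z, v} + sum (edge_weight f E') R"
    unfolding sombor_index_def E'_def R_def using fin \<open>{z, v} \<in> E\<close> \<open>{z, v} \<noteq> {u, x}\<close> \<open>{u, v} \<notin> E\<close>
    by (simp add: sum.remove)
  moreover have "sum (edge_weight f E') R \<le> sum (edge_weight f E) R"
  proof (rule sum_mono, rule edge_weight_mono[OF f])
    fix e assume e: "e \<in> R"
    show "finite E'" "e \<in> E'"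
      using fin e unfolding E'_def R_def by simp_all
    have "v \<notin> e"
    proof
      assume "v \<in> e"
      with e have "e \<in> {e \<in> E. v \<in> e}"
        unfolding R_def by simp
      with e show False
        unfolding pendant R_def by simp
    qed
    then show "deg E' w \<le> deg E w" if "w \<in> e" for w
      using that by (intro deg_E'(4)) auto
  qed
  moreover have "edge_weight f E' {u, v} + edge_weight f E' {z, v} < edge_weight f E {u, x} + edge_weight f E {z, v}"
    using gain \<open>u \<noteq> x\<close> \<open>u \<noteq> v\<close> \<open>z \<noteq> v\<close> deg_E'(1-3) \<open>deg E v = 1\<close>
    by (simp add: edge_weight_doubleton)
  ultimately show ?thesis
    unfolding E'_def by linarith
qed

lemma sombor_indices_move_edge_to_pendant:
  assumes "finite E" "{u, x} \<in> E" "{e \<in> E. v \<in> e} = {{z, v}}" "distinct [u, x, v, z]"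
    and "deg E u \<le> 2" "3 \<le> deg E x" "2 \<le> deg E z"
  shows "SO ((E - {{u, x}}) \<union> {{u, v}}) < SO E \<and> SO_red ((E - {{u, x}}) \<union> {{u, v}}) < SO_red E"
proof
  note move = sombor_index_move_edge_to_pendant[OF assms(1-4)]
  show "SO ((E - {{u, x}}) \<union> {{u, v}}) < SO E"
    unfolding SO_eq_sombor_index
  proof (rule move)
    show "mono real"
      by (rule monoI) simp
    show "sqrt ((real (deg E u))\<^sup>2 + (real 2)\<^sup>2) + sqrt ((real (deg E z))\<^sup>2 + (real 2)\<^sup>2)
      < sqrt ((real (deg E u))\<^sup>2 + (real (deg E x))\<^sup>2) + sqrt ((real (deg E z))\<^sup>2 + (real 1)\<^sup>2)"
      using sombor_exchange_inequality[of "real (deg E u)" "real (deg E x)" "real (deg E z)"] assms(5-7)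
      by simp
  qed simp
  show "SO_red ((E - {{u, x}}) \<union> {{u, v}}) < SO_red E"
    unfolding SO_red_eq_sombor_index
  proof (rule move)
    show "mono (\<lambda>d. real d - 1)"
      by (rule monoI) simp
    show "sqrt ((real (deg E u) - 1)\<^sup>2 + (real 2 - 1)\<^sup>2) + sqrt ((real (deg E z) - 1)\<^sup>2 + (real 2 - 1)\<^sup>2)
      < sqrt ((real (deg E u) - 1)\<^sup>2 + (real (deg E x) - 1)\<^sup>2) + sqrt ((real (deg E z) - 1)\<^sup>2 + (real 1 - 1)\<^sup>2)"
      using reduced_sombor_exchange_inequality[of "real (deg E u) - 1" "real (deg E x) - 1" "real (deg E z) - 1"]
        assms(5-7) by simp
  qed simp
qed

theorem lemma2p4:
  fixes V0 :: "'a set" and E0 :: "'a set set" and x y :: 'a and us vs :: "'a list"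
  assumes G0: "connected_graph V0 E0"
    and xy: "x \<in> V0" "y \<in> V0" "x \<noteq> y"
    and dx: "deg E0 x \<in> {2, 3}" and dy: "deg E0 y \<in> {2, 3}"
    and P1: "distinct us" "length us \<ge> 1"
    and P2: "distinct vs" "length vs \<ge> 1"
    and disj: "set us \<inter> set vs = {}" "set us \<inter> V0 = {}" "set vs \<inter> V0 = {}"
    and E1_def: "E1 = E0 \<union> path_edges us \<union> path_edges vs \<union> {{hd us, x}, {hd vs, y}}"
    and E2_def: "E2 = (E1 - {{hd us, x}}) \<union> {{hd us, last vs}}"
  shows "SO E1 > SO E2 \<and> SO_red E1 > SO_red E2"
proof -
  define xs where "xs = x # us"
  define ys where "ys = y # vs"
  have "us \<noteq> []" "vs \<noteq> []"
    using P1(2) P2(2) by auto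
  have "finite E0" and E0_sub: "\<And>e. e \<in> E0 \<Longrightarrow> e \<subseteq> V0"
    using G0 simple_graph_finite_edges unfolding connected_graph_def simple_graph_def by auto
  have E1: "E1 = E0 \<union> path_edges xs \<union> path_edges ys"
    unfolding E1_def xs_def ys_def by (rule path_edges_attach_two_paths[OF \<open>us \<noteq> []\<close> \<open>vs \<noteq> []\<close>])
  then have fin: "finite E1" and "E0 \<subseteq> E1" and "{hd us, x} \<in> E1"
    using \<open>finite E0\<close> by (auto simp: finite_path_edges E1_def)
  have "distinct xs" "distinct ys" "2 \<le> length ys" "last ys = last vs" "hd ys = y"
    using P1 P2 disj xy \<open>vs \<noteq> []\<close> unfolding xs_def ys_def by auto
  have u_notin: "hd us \<notin> V0" "hd us \<notin> set ys" and v_notin: "last vs \<notin> V0" "last vs \<notin> set xs"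
    using disj xy hd_in_set[OF \<open>us \<noteq> []\<close>] last_in_set[OF \<open>vs \<noteq> []\<close>]
    unfolding xs_def ys_def by auto
  have "\<forall>e \<in> E1 - path_edges ys. last ys \<notin> e"
    using E0_sub path_edges_subset[of _ xs] v_notin unfolding E1 \<open>last ys = last vs\<close> by blast
  moreover have "2 \<le> deg E1 (hd ys)"
    using deg_mono[OF fin \<open>E0 \<subseteq> E1\<close>, of y] dy \<open>hd ys = y\<close> by auto
  ultimately obtain z where z: "z \<in> set ys" "z \<noteq> last ys" "{e \<in> E1. last ys \<in> e} = {{z, last ys}}"
      "2 \<le> deg E1 z"
    using neighbour_of_path_end[OF fin \<open>distinct ys\<close> \<open>2 \<le> length ys\<close>] E1 by blast
  have "\<forall>e \<in> E1 - path_edges xs. hd us \<notin> e"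
    using E0_sub path_edges_subset[of _ ys] u_notin unfolding E1 by blast
  then have "deg E1 (hd us) = deg (path_edges xs) (hd us)"
    unfolding E1 by (intro deg_eq_on_subset) auto
  then have "deg E1 (hd us) \<le> 2"
    using deg_path_edges_le_2[OF \<open>distinct xs\<close>] by simp
  have "{hd us, x} \<notin> E0"
    using E0_sub u_notin by blast
  then have "3 \<le> deg E1 x"
    using deg_insert_edge[OF \<open>finite E0\<close>, of "{hd us, x}" x] deg_mono[OF fin, of "insert {hd us, x} E0" x]
      \<open>E0 \<subseteq> E1\<close> \<open>{hd us, x} \<in> E1\<close> dx by auto
  have "distinct [hd us, x, last vs, z]"
    using z(1,2) \<open>last ys = last vs\<close> u_notin v_notin disj(3) xy last_in_set[OF \<open>vs \<noteq> []\<close>]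
    unfolding xs_def ys_def by auto
  then show ?thesis
    using sombor_indices_move_edge_to_pendant[OF fin \<open>{hd us, x} \<in> E1\<close> z(3)[unfolded \<open>last ys = last vs\<close>]]
      \<open>deg E1 (hd us) \<le> 2\<close> \<open>3 \<le> deg E1 x\<close> z(4) unfolding E2_def by blast
qed

end
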